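(* Let $d\ge2$, equip $\mathbb{R}^d$ with the canonical Euclidean norm $|\cdot|$, and let $X$ be an $\mathbb{R}^d$-valued random vector with $\mathbb{E}|X|^2<+\infty$ whose distribution $\mu$ assigns no mass to hyperplanes and has convex support $C_\mu=\operatorname{supp}(\mu)$. Let $(a_N)_{N\ge1}$ be an $L^2$-optimal greedy quantization sequence for $X$, fix $N\ge2$, and write $a^{(N-1)}=\{a_1,\dots,a_{N-1}\}$, $a^{(N)}=\{a_1,\dots,a_N\}$. Let $a_{[0]}\in C_\mu\setminus a^{(N-1)}$ and define recursively $$a_{[n+1]}=\mathbb{E}\big(X\,\big|\,X\in W_{N,[n]}\big),\quad n\ge0,$$ where $W_{N,[n]}=\{\xi\in\mathbb{R}^d:|\xi-a_{[n]}|\le d(\xi,a^{(N-1)})\}$ is the closed Voronoi cell of $a_{[n]}$ induced by $a^{(N-1)}\cup\{a_{[n]}\}$. Then $(a_{[n]})_{n\ge0}$ is bounded and there exists $\ell\in\big[e_2(a^{(N)},X),\,e_2(a^{(N-1)}\cup\{a_{[0]}\},X)\big]$ such that the set of limiting points of $(a_{[n]})_{n\ge0}$ is a connected compact subset of $$\Lambda_\ell=\Big\{a\in\mathbb{R}^d:\ e_2\big(a^{(N-1)}\cup\{a\},X\big)=\ell\ \text{ and }\ a=\mathbb{E}\big(X\,\big|\,X\in W_{N,a}\big)\Big\},$$ where $W_{N,a}=\{\xi:|\xi-a|\le d(\xi,a^{(N-1)})\}$. In particular $e_2(a^{(N-1)}\cup\{a_{[n]}\},X)\to\ell$ as $n\to+\infty$.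 Furthermore, if $\Lambda_\ell$ is locally finite (has finite intersection with every compact subset of $\mathbb{R}^d$), then $a_{[n]}$ converges to some point of $\Lambda_\ell$.
   Context: For $\Gamma\subset\mathbb{R}^d$ put $e_2(\Gamma,X)=\big(\mathbb{E}\,d(X,\Gamma)^2\big)^{1/2}$ with $d(\xi,\Gamma)=\inf_{a\in\Gamma}|\xi-a|$ ($d(\xi,\emptyset)=+\infty$). A sequence $(a_N)_{N\ge1}$ is an $L^2$-optimal greedy quantization sequence if, writing $a^{(N)}=\{a_1,\dots,a_N\}$ and $a^{(0)}=\emptyset$, $a_{N+1}\in\operatorname{argmin}_{\xi\in\mathbb{R}^d}e_2(a^{(N)}\cup\{\xi\},X)$ for every $N\ge0$. *)

theory Defs
  imports "HOL-Probability.Probability"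
begin

definition quant_err2 :: "'p measure \<Rightarrow> ('p \<Rightarrow> 'a::euclidean_space) \<Rightarrow> 'a set \<Rightarrow> real" where
  "quant_err2 M X \<Gamma> = sqrt (\<integral>\<omega>. (infdist (X \<omega>) \<Gamma>)\<^sup>2 \<partial>M)"

definition greedy_quant_seq :: "'p measure \<Rightarrow> ('p \<Rightarrow> 'a::euclidean_space) \<Rightarrow> (nat \<Rightarrow> 'a) \<Rightarrow> bool" where
  "greedy_quant_seq M X a \<longleftrightarrow>
     (\<forall>N. \<forall>\<xi>. quant_err2 M X (a ` {1..N} \<union> {a (Suc N)}) \<le> quant_err2 M X (a ` {1..N} \<union> {\<xi>}))"

definition distr_support :: "'p measure \<Rightarrow> ('p \<Rightarrow> 'a::euclidean_space) \<Rightarrow> 'a set" where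
  "distr_support M X = {x. \<forall>r>0. measure M {\<omega>\<in>space M. X \<omega> \<in> ball x r} > 0}"

definition voronoi_cell :: "'a::euclidean_space set \<Rightarrow> 'a \<Rightarrow> 'a set" where
  "voronoi_cell A a = {\<xi>. dist \<xi> a \<le> infdist \<xi> A}"

definition cond_mean :: "'p measure \<Rightarrow> ('p \<Rightarrow> 'a::euclidean_space) \<Rightarrow> 'a set \<Rightarrow> 'a" where
  "cond_mean M X W = (1 / measure M {\<omega>\<in>space M. X \<omega> \<in> W}) *\<^sub>R
      (\<integral>\<omega>. indicator {\<omega>\<in>space M. X \<omega> \<in> W} \<omega> *\<^sub>R X \<omega> \<partial>M)"

definition limit_points :: "(nat \<Rightarrow> 'a::topological_space) \<Rightarrow> 'a set" where
  "limit_points b = {x. \<exists>r. strict_mono r \<and> (b \<circ> r) \<longlonglongrightarrow> x}"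

end

theory Submission
  imports Defs
begin

(*
  Lloyd's iteration for the new point is a descent method. Put D(x) = E d(X, a^(N-1) \<union> {x})^2
  and let p(x) be the mass of the Voronoi cell of x. Replacing x by the centroid T(x) of its
  cell gives D(T x) + p(x) |T x - x|^2 \<le> D(x). A starting point in the support but off the grid
  has D(a_[0]) < D(a^(N-1)), and on the sublevel set {D \<le> D(a_[0])} the cell masses are bounded
  below (uniform integrability of d(X, a^(N-1))^2) and the points are bounded (Markov). Hence
  D(a_[n]) decreases to some l^2, the orbit is bounded and its steps tend to 0, so by Ostrowski's
  theorem its limit set is compact and connected. D is continuous, and T is continuous at every
  point off the grid whose cell has positive mass, since X charges no bisector hyperplane; so
  every limit point is a fixed point of T at level l. If that level set is locally finite, the
  limit set is finite and connected, hence a single point.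
*)

section \<open>Limit points of sequences with vanishing steps\<close>

lemma strict_mono_choice:
  fixes P :: "nat \<Rightarrow> nat \<Rightarrow> bool"
  assumes "\<And>i. \<exists>\<^sub>F k in sequentially. P i k"
  shows "\<exists>r. strict_mono r \<and> (\<forall>i. P i (r i))"
proof -
  have "\<exists>r. \<forall>i. P i (r i) \<and> r i < r (Suc i)"
  proof (rule dependent_nat_choice)
    show "\<exists>k. P 0 k"
      using assms[of 0] by (auto simp: frequently_sequentially)
    show "\<exists>k'. P (Suc i) k' \<and> k < k'" for k i
      using assms[of "Suc i"] unfolding frequently_sequentially by (meson Suc_le_lessD)
  qed
  then show ?thesis
    by (auto simp: strict_mono_Suc_iff)
qed

lemma limit_points_iff:
  fixes b :: "nat \<Rightarrow> 'a::metric_space"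
  shows "x \<in> limit_points b \<longleftrightarrow> (\<forall>e>0. \<exists>\<^sub>F n in sequentially. dist (b n) x < e)"
proof (intro iffI allI impI)
  fix e :: real
  assume "x \<in> limit_points b" "e > 0"
  then obtain r where r: "strict_mono r" "\<forall>\<^sub>F i in sequentially. dist (b (r i)) x < e"
    by (auto simp: limit_points_def tendsto_iff)
  then obtain i0 where i0: "\<And>i. i \<ge> i0 \<Longrightarrow> dist (b (r i)) x < e"
    by (auto simp: eventually_sequentially)
  show "\<exists>\<^sub>F n in sequentially. dist (b n) x < e"
    unfolding frequently_sequentially
  proof
    fix n
    have "n \<le> r (max n i0)"
      using seq_suble[OF r(1), of "max n i0"] by simp
    then show "\<exists>k\<ge>n. dist (b k) x < e"
      using i0[of "max n i0"] by auto
  qed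
next
  assume near: "\<forall>e>0. \<exists>\<^sub>F n in sequentially. dist (b n) x < e"
  obtain r where r: "strict_mono r" "\<And>i. dist (b (r i)) x < inverse (real (Suc i))"
    using strict_mono_choice[of "\<lambda>i n. dist (b n) x < inverse (real (Suc i))"] near by auto
  have "\<forall>\<^sub>F i in sequentially. dist (b (r i)) x \<le> inverse (real (Suc i))"
    using r(2) by (intro always_eventually allI less_imp_le)
  then have "(\<lambda>i. dist (b (r i)) x) \<longlonglongrightarrow> 0"
    by (rule tendsto_sandwich[OF always_eventually[OF allI[OF zero_le_dist]] _ tendsto_const
          LIMSEQ_inverse_real_of_nat])
  then have "(b \<circ> r) \<longlonglongrightarrow> x"
    unfolding comp_def by (subst tendsto_dist_iff)
  with r(1) show "x \<in> limit_points b"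
    unfolding limit_points_def by blast
qed

lemma limit_points_closed:
  fixes b :: "nat \<Rightarrow> 'a::metric_space"
  shows "closed (limit_points b)"
proof -
  have "x \<in> limit_points b" if "x \<in> closure (limit_points b)" for x
    unfolding limit_points_iff
  proof (intro allI impI)
    fix e :: real
    assume "e > 0"
    then obtain y where y: "y \<in> limit_points b" "dist y x < e/2"
      using \<open>x \<in> closure (limit_points b)\<close> by (meson closure_approachable half_gt_zero)
    then have "\<exists>\<^sub>F n in sequentially. dist (b n) y < e/2"
      using y(1) \<open>e > 0\<close> unfolding limit_points_iff by (meson half_gt_zero)
    then show "\<exists>\<^sub>F n in sequentially. dist (b n) x < e"
      by (rule frequently_elim1) (metis y(2) dist_triangle_half_l dist_commute)
  qed
  then show ?thesis
    using closure_subset_eq by blast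
qed

lemma limit_points_subset_closure:
  fixes b :: "nat \<Rightarrow> 'a::metric_space"
  shows "limit_points b \<subseteq> closure (range b)"
proof
  fix x
  assume "x \<in> limit_points b"
  then have "\<forall>e>0. \<exists>k. dist (b k) x < e"
    unfolding limit_points_iff using frequently_ex by blast
  then show "x \<in> closure (range b)"
    unfolding closure_approachable by blast
qed

lemma limit_point_in_closed:
  fixes b :: "nat \<Rightarrow> 'a::heine_borel"
  assumes "bounded (range b)" "closed S" "\<exists>\<^sub>F n in sequentially. b n \<in> S"
  shows "\<exists>x\<in>S. x \<in> limit_points b"
proof -
  have "\<exists>r::nat \<Rightarrow> nat. strict_mono r \<and> (\<forall>i. b (r i) \<in> S)"
    using strict_mono_choice[of "\<lambda>_ n. b n \<in> S"] assms(3) by simp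
  then obtain r :: "nat \<Rightarrow> nat" where r: "strict_mono r" "\<And>i. b (r i) \<in> S"
    by blast
  have "bounded (range (b \<circ> r))"
    using assms(1) by (rule bounded_subset) auto
  then obtain x q where q: "strict_mono q" "(b \<circ> r \<circ> q) \<longlonglongrightarrow> x"
    using bounded_imp_convergent_subsequence by blast
  have "x \<in> S"
    using closed_sequentially[OF assms(2) _ q(2)] r(2) by simp
  moreover have "x \<in> limit_points b"
    using strict_mono_o[OF r(1) q(1)] q(2) by (auto simp: limit_points_def o_assoc)
  ultimately show ?thesis by blast
qed

lemma limit_points_nonempty:
  fixes b :: "nat \<Rightarrow> 'a::heine_borel"
  assumes "bounded (range b)"
  shows "limit_points b \<noteq> {}"
  using limit_point_in_closed[OF assms closed_UNIV] by auto

lemma limit_points_compact: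
  fixes b :: "nat \<Rightarrow> 'a::heine_borel"
  assumes "bounded (range b)"
  shows "compact (limit_points b)"
proof -
  have "bounded (limit_points b)"
    using bounded_closure[OF assms] limit_points_subset_closure by (rule bounded_subset)
  then show ?thesis
    using limit_points_closed compact_eq_bounded_closed by blast
qed

lemma LIMSEQ_if_limit_points_eq_singleton:
  fixes b :: "nat \<Rightarrow> 'a::heine_borel"
  assumes "bounded (range b)" "limit_points b = {x}"
  shows "b \<longlonglongrightarrow> x"
proof (rule ccontr)
  assume "\<not> b \<longlonglongrightarrow> x"
  then obtain e where "e > 0" "\<exists>\<^sub>F n in sequentially. b n \<in> {y. e \<le> dist y x}"
    by (auto simp: tendsto_iff not_eventually not_less)
  moreover have "closed {y. e \<le> dist y x}"
    by (intro closed_Collect_le continuous_intros)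
  ultimately show False
    using limit_point_in_closed[OF assms(1)] assms(2) by fastforce
qed

text \<open>A discrete intermediate value argument, at the first upward crossings of \<open>\<delta>\<close>.\<close>
lemma frequently_crossing:
  fixes b :: "nat \<Rightarrow> 'a::metric_space" and f :: "'a \<Rightarrow> real"
  assumes lipschitz: "\<And>y z. f y \<le> f z + dist y z"
    and steps: "\<forall>\<^sub>F n in sequentially. dist (b (Suc n)) (b n) < \<delta>"
    and below: "\<exists>\<^sub>F n in sequentially. f (b n) < \<delta>"
    and above: "\<exists>\<^sub>F n in sequentially. \<delta> \<le> f (b n)"
  shows "\<exists>\<^sub>F n in sequentially. \<delta> \<le> f (b n) \<and> f (b n) < 2 * \<delta>"
  unfolding frequently_sequentially
proof
  fix n
  obtain n0 where n0: "\<And>k. k \<ge> n0 \<Longrightarrow> dist (b (Suc k)) (b k) < \<delta>"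
    using steps by (auto simp: eventually_sequentially)
  obtain k1 where k1: "k1 \<ge> max n n0" "f (b k1) < \<delta>"
    using below unfolding frequently_sequentially by blast
  obtain k2 where k2: "k2 \<ge> k1" "\<delta> \<le> f (b k2)"
    using above unfolding frequently_sequentially by blast
  define k where "k = (LEAST k. k1 \<le> k \<and> \<delta> \<le> f (b k))"
  have k: "k1 \<le> k" "\<delta> \<le> f (b k)"
    using LeastI[of "\<lambda>k. k1 \<le> k \<and> \<delta> \<le> f (b k)", OF conjI[OF k2]] by (auto simp: k_def)
  moreover have "k \<noteq> k1"
    using k(2) k1(2) by auto
  ultimately obtain j where j: "k = Suc j" "k1 \<le> j"
    by (intro that[of "k - 1"]) arith+
  have "f (b j) < \<delta>"
    using not_less_Least[of j "\<lambda>k. k1 \<le> k \<and> \<delta> \<le> f (b k)"] j by (auto simp: k_def)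
  moreover have "dist (b k) (b j) < \<delta>"
    using n0[of j] j k1(1) by simp
  ultimately have "f (b k) < 2 * \<delta>"
    using lipschitz[of "b k" "b j"] by linarith
  then show "\<exists>k\<ge>n. \<delta> \<le> f (b k) \<and> f (b k) < 2 * \<delta>"
    using k k1(1) by (intro exI[of _ k]) auto
qed

lemma limit_point_at_intermediate_infdist:
  fixes b :: "nat \<Rightarrow> 'a::heine_borel"
  assumes bounded: "bounded (range b)" and steps: "(\<lambda>n. dist (b (Suc n)) (b n)) \<longlonglongrightarrow> 0"
    and p: "p \<in> limit_points b" "p \<in> P" and q: "q \<in> limit_points b" "3 * \<delta> \<le> infdist q P"
    and "\<delta> > 0"
  shows "\<exists>z\<in>limit_points b. \<delta> \<le> infdist z P \<and> infdist z P \<le> 2 * \<delta>"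
proof -
  define f where "f y = infdist y P" for y
  have "\<exists>\<^sub>F n in sequentially. \<delta> \<le> f (b n) \<and> f (b n) < 2 * \<delta>"
  proof (rule frequently_crossing[where f=f and b=b])
    show "f y \<le> f z + dist y z" for y z
      by (simp add: f_def infdist_triangle)
    show "\<forall>\<^sub>F n in sequentially. dist (b (Suc n)) (b n) < \<delta>"
      using order_tendstoD(2)[OF steps \<open>\<delta> > 0\<close>] .
    have "\<exists>\<^sub>F n in sequentially. dist (b n) p < \<delta>"
      using p(1) \<open>\<delta> > 0\<close> by (simp add: limit_points_iff)
    then show "\<exists>\<^sub>F n in sequentially. f (b n) < \<delta>"
      by (rule frequently_elim1) (metis f_def infdist_le le_less_trans p(2))
    have "\<exists>\<^sub>F n in sequentially. dist (b n) q < \<delta>"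
      using q(1) \<open>\<delta> > 0\<close> by (simp add: limit_points_iff)
    then show "\<exists>\<^sub>F n in sequentially. \<delta> \<le> f (b n)"
    proof (rule frequently_elim1)
      fix n
      assume "dist (b n) q < \<delta>"
      then show "\<delta> \<le> f (b n)"
        using q(2) infdist_triangle[of q P "b n"] dist_commute[of q "b n"] \<open>\<delta> > 0\<close>
        unfolding f_def by linarith
    qed
  qed
  then have "\<exists>\<^sub>F n in sequentially. b n \<in> {y. \<delta> \<le> f y \<and> f y \<le> 2 * \<delta>}"
    by (rule frequently_elim1) simp
  moreover have "closed {y. \<delta> \<le> f y \<and> f y \<le> 2 * \<delta>}"
    unfolding f_def by (intro closed_Collect_conj closed_Collect_le continuous_intros)
  ultimately obtain z where "z \<in> {y. \<delta> \<le> f y \<and> f y \<le> 2 * \<delta>}" "z \<in> limit_points b"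
    using limit_point_in_closed[OF bounded] by blast
  then show ?thesis
    by (auto simp: f_def)
qed

lemma limit_points_connected:
  fixes b :: "nat \<Rightarrow> 'a::heine_borel"
  assumes bounded: "bounded (range b)" and steps: "(\<lambda>n. dist (b (Suc n)) (b n)) \<longlonglongrightarrow> 0"
  shows "connected (limit_points b)"
proof (rule ccontr)
  let ?L = "limit_points b"
  assume "\<not> connected ?L"
  then obtain E F where EF: "closed E" "closed F" "?L \<subseteq> E \<union> F" "E \<inter> F \<inter> ?L = {}"
    "E \<inter> ?L \<noteq> {}" "F \<inter> ?L \<noteq> {}"
    unfolding connected_closed by blast
  define P where "P = E \<inter> ?L"
  define Q where "Q = F \<inter> ?L"
  have "compact P"
    unfolding P_def using EF(1) limit_points_compact[OF bounded] by (rule closed_Int_compact)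
  have "closed Q"
    unfolding Q_def using EF(2) limit_points_closed by (rule closed_Int)
  have "P \<noteq> {}" "P \<inter> Q = {}"
    using EF(4,5) unfolding P_def Q_def by blast+
  obtain d where "d > 0" and d: "\<And>p q. p \<in> P \<Longrightarrow> q \<in> Q \<Longrightarrow> d \<le> dist p q"
    using separate_compact_closed[OF \<open>compact P\<close> \<open>closed Q\<close> \<open>P \<inter> Q = {}\<close>] by blast
  have far: "d \<le> infdist q P" if "q \<in> Q" for q
  proof -
    obtain p where "p \<in> P" "infdist q P = dist q p"
      using infdist_attains_inf[OF compact_imp_closed[OF \<open>compact P\<close>] \<open>P \<noteq> {}\<close>] by blast
    then show ?thesis
      using d[of p q] that by (simp add: dist_commute)
  qed
  obtain p q where "p \<in> P" "q \<in> Q"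
    using EF(5,6) by (auto simp: P_def Q_def)
  then obtain z where "z \<in> ?L" "d / 3 \<le> infdist z P" "infdist z P \<le> 2 * (d / 3)"
    using limit_point_at_intermediate_infdist[OF bounded steps, of p P q "d / 3"] far \<open>d > 0\<close>
    by (auto simp: P_def Q_def)
  moreover from this(1) have "z \<in> P \<or> z \<in> Q"
    using EF(3) by (auto simp: P_def Q_def)
  ultimately show False
    using far[of z] \<open>d > 0\<close> by auto
qed

lemma LIMSEQ_if_limit_points_locally_finite:
  fixes b :: "nat \<Rightarrow> 'a::heine_borel"
  assumes bounded: "bounded (range b)" and steps: "(\<lambda>n. dist (b (Suc n)) (b n)) \<longlonglongrightarrow> 0"
    and "limit_points b \<subseteq> S" "\<And>K. compact K \<Longrightarrow> finite (S \<inter> K)"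
  shows "\<exists>x\<in>S. b \<longlonglongrightarrow> x"
proof -
  have "finite (limit_points b)"
    using assms(4)[OF limit_points_compact[OF bounded]] assms(3) by (simp add: Int_absorb1)
  then obtain x where "limit_points b = {x}"
    using connected_finite_iff_sing[OF limit_points_connected[OF bounded steps]]
      limit_points_nonempty[OF bounded] by blast
  then show ?thesis
    using LIMSEQ_if_limit_points_eq_singleton[OF bounded] assms(3) by blast
qed

section \<open>Adding one point to a finite grid\<close>

lemma greedy_quant_seq_le:
  assumes "greedy_quant_seq M X a" "N \<ge> 1"
  shows "quant_err2 M X (a ` {1..N}) \<le> quant_err2 M X (a ` {1..N-1} \<union> {\<xi>})"
proof -
  have "{1..N} = insert (Suc (N - 1)) {1..N-1}"
    using assms(2) by auto
  then have "a ` {1..N} = a ` {1..N-1} \<union> {a (Suc (N - 1))}"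
    by simp
  then show ?thesis
    using assms(1) unfolding greedy_quant_seq_def by presburger
qed

lemma integral_excess_LIMSEQ_zero:
  fixes f :: "'p \<Rightarrow> real"
  assumes [measurable]: "f \<in> borel_measurable M" and "integrable M f"
  shows "(\<lambda>n. \<integral>\<omega>. max 0 (f \<omega> - real n) \<partial>M) \<longlonglongrightarrow> 0"
proof -
  have "(\<lambda>n. \<integral>\<omega>. max 0 (f \<omega> - real n) \<partial>M) \<longlonglongrightarrow> (\<integral>\<omega>. 0 \<partial>M)"
  proof (rule integral_dominated_convergence[where w="\<lambda>\<omega>. \<bar>f \<omega>\<bar>"])
    show "AE \<omega> in M. (\<lambda>n. max 0 (f \<omega> - real n)) \<longlonglongrightarrow> 0"
    proof (intro AE_I2 tendsto_eventually)
      fix \<omega>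
      obtain n0 :: nat where "f \<omega> \<le> n0"
        using real_arch_simple by blast
      then show "\<forall>\<^sub>F n in sequentially. max 0 (f \<omega> - real n) = 0"
        unfolding eventually_sequentially by (intro exI[of _ n0]) auto
    qed
    show "AE \<omega> in M. norm (max 0 (f \<omega> - real n)) \<le> \<bar>f \<omega>\<bar>" for n
      by (intro AE_I2) auto
  qed (simp_all add: assms(2))
  then show ?thesis
    by simp
qed

lemma (in finite_measure) uniformly_integrable_real:
  fixes f :: "'a \<Rightarrow> real"
  assumes "integrable M f" "\<delta> > 0"
  obtains K where "K > 0"
    "\<And>S. S \<in> sets M \<Longrightarrow> (\<integral>\<omega>. indicator S \<omega> * f \<omega> \<partial>M) \<le> K * measure M S + \<delta>"
proof -
  define excess where "excess n \<omega> = max 0 (f \<omega> - real n)" for n \<omega>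
  have [measurable]: "f \<in> borel_measurable M"
    using assms(1) by (rule borel_measurable_integrable)
  have [measurable]: "excess n \<in> borel_measurable M" for n
    unfolding excess_def by measurable
  have integrable_excess: "integrable M (excess n)" for n
    by (rule Bochner_Integration.integrable_bound[OF integrable_abs[OF assms(1)]])
       (auto simp: excess_def)
  have "\<forall>\<^sub>F n in sequentially. (\<integral>\<omega>. excess n \<omega> \<partial>M) < \<delta>"
    using integral_excess_LIMSEQ_zero[OF _ assms(1)] assms(2) unfolding excess_def
    by (intro order_tendstoD(2)) auto
  then obtain n where n: "(\<integral>\<omega>. excess n \<omega> \<partial>M) < \<delta>"
    by (auto simp: eventually_sequentially)
  show thesis
  proof (rule that[of "real n + 1"])
    fix S
    assume S [measurable]: "S \<in> sets M"
    have "(\<integral>\<omega>. indicator S \<omega> * f \<omega> \<partial>M) \<le> (\<integral>\<omega>. (real n + 1) * indicator S \<omega> + excess n \<omega> \<partial>M)"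
    proof (rule integral_mono)
      show "integrable M (\<lambda>\<omega>. indicator S \<omega> * f \<omega>)"
        using integrable_real_mult_indicator[OF S assms(1)] by (simp add: mult.commute)
      show "integrable M (\<lambda>\<omega>. (real n + 1) * indicator S \<omega> + excess n \<omega>)"
        using integrable_excess by (simp add: less_top[symmetric])
      show "indicator S \<omega> * f \<omega> \<le> (real n + 1) * indicator S \<omega> + excess n \<omega>" for \<omega>
        by (auto simp: indicator_def excess_def)
    qed
    also have "\<dots> = (real n + 1) * measure M S + (\<integral>\<omega>. excess n \<omega> \<partial>M)"
      using integrable_excess
      by (simp add: less_top[symmetric] Int_absorb2 sets.sets_into_space)
    finally show "(\<integral>\<omega>. indicator S \<omega> * f \<omega> \<partial>M) \<le> (real n + 1) * measure M S + \<delta>"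
      using n by linarith
  qed simp
qed

lemma sqdist_diff_eq:
  fixes \<xi> x c :: "'a::real_inner"
  shows "(dist \<xi> x)\<^sup>2 - (dist \<xi> c)\<^sup>2 = ((norm (c - x))\<^sup>2 - 2 * (c \<bullet> (c - x))) + 2 * (\<xi> \<bullet> (c - x))"
  by (simp add: dist_norm power2_norm_eq_inner inner_commute algebra_simps)

lemma borel_measurable_infdist [measurable]:
  fixes f :: "'p \<Rightarrow> 'a::metric_space"
  assumes [measurable]: "f \<in> borel_measurable M"
  shows "(\<lambda>\<omega>. infdist (f \<omega>) S) \<in> borel_measurable M"
  by (intro borel_measurable_continuous_on[where f="\<lambda>x. infdist x S"] continuous_on_infdist
      continuous_on_id assms)

locale lloyd_one_point = prob_space M for M :: "'p measure" +
  fixes X :: "'p \<Rightarrow> 'a::euclidean_space" and A :: "'a set"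
  assumes X_measurable [measurable]: "X \<in> borel_measurable M"
    and integrable_norm_sq: "integrable M (\<lambda>\<omega>. (norm (X \<omega>))\<^sup>2)"
    and hyperplanes_null: "\<And>u c. u \<noteq> 0 \<Longrightarrow> measure M {\<omega>\<in>space M. X \<omega> \<bullet> u = c} = 0"
    and finite_grid: "finite A"
    and grid_nonempty: "A \<noteq> {}"
begin

definition grid_sqdist :: "'p \<Rightarrow> real" where
  "grid_sqdist \<omega> = (infdist (X \<omega>) A)\<^sup>2"

definition grid_distortion :: real where
  "grid_distortion = (\<integral>\<omega>. grid_sqdist \<omega> \<partial>M)"

definition distortion :: "'a \<Rightarrow> real" where
  "distortion x = (\<integral>\<omega>. (infdist (X \<omega>) (insert x A))\<^sup>2 \<partial>M)"

definition cell :: "'a \<Rightarrow> 'p set" where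
  "cell x = {\<omega>\<in>space M. X \<omega> \<in> voronoi_cell A x}"

definition inner_cell :: "'a \<Rightarrow> 'p set" where
  "inner_cell x = {\<omega>\<in>space M. dist (X \<omega>) x < infdist (X \<omega>) A}"

definition cell_mass :: "'a \<Rightarrow> real" where
  "cell_mass x = measure M (cell x)"

definition cell_moment :: "'a \<Rightarrow> 'a" where
  "cell_moment x = (\<integral>\<omega>. indicator (cell x) \<omega> *\<^sub>R X \<omega> \<partial>M)"

definition lloyd_map :: "'a \<Rightarrow> 'a" where
  "lloyd_map x = cond_mean M X (voronoi_cell A x)"

lemma quant_err2_insert: "quant_err2 M X (A \<union> {x}) = sqrt (distortion x)"
  by (simp add: quant_err2_def distortion_def)

lemma infdist_insert_grid: "infdist \<xi> (insert x A) = min (infdist \<xi> A) (dist \<xi> x)"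
  using infdist_Un_min[OF grid_nonempty, of "{x}"] by simp

lemma sqdist_insert_le_grid: "(infdist \<xi> (insert x A))\<^sup>2 \<le> (infdist \<xi> A)\<^sup>2"
  unfolding infdist_insert_grid by (simp add: infdist_nonneg power_mono)

lemma cell_eq: "cell x = {\<omega>\<in>space M. dist (X \<omega>) x \<le> infdist (X \<omega>) A}"
  by (auto simp: cell_def voronoi_cell_def)

lemma sets_cell [measurable]: "cell x \<in> sets M"
  unfolding cell_eq by measurable

lemma sets_inner_cell [measurable]: "inner_cell x \<in> sets M"
  unfolding inner_cell_def by measurable

lemma inner_cell_subset_cell: "inner_cell x \<subseteq> cell x"
  by (auto simp: inner_cell_def cell_eq)

lemma lloyd_map_eq: "lloyd_map x = (1 / cell_mass x) *\<^sub>R cell_moment x"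
  unfolding lloyd_map_def cond_mean_def cell_mass_def cell_moment_def cell_def by simp

lemma borel_measurable_grid_sqdist [measurable]: "grid_sqdist \<in> borel_measurable M"
  unfolding grid_sqdist_def by measurable

lemma integrable_indicator_real [simp]: "S \<in> sets M \<Longrightarrow> integrable M (indicator S :: 'p \<Rightarrow> real)"
  by (simp add: less_top[symmetric])

lemma grid_sqdist_le:
  assumes "a \<in> A"
  shows "grid_sqdist \<omega> \<le> 2 * (norm (X \<omega>))\<^sup>2 + 2 * (norm a)\<^sup>2"
proof -
  have "infdist (X \<omega>) A \<le> norm (X \<omega>) + norm a"
    using infdist_le[OF assms, of "X \<omega>"] norm_triangle_ineq4[of "X \<omega>" a] by (simp add: dist_norm)
  then have "grid_sqdist \<omega> \<le> (norm (X \<omega>) + norm a)\<^sup>2"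
    unfolding grid_sqdist_def by (simp add: infdist_nonneg power_mono)
  also have "\<dots> \<le> 2 * (norm (X \<omega>))\<^sup>2 + 2 * (norm a)\<^sup>2"
    using zero_le_power2[of "norm (X \<omega>) - norm a"] by (simp add: power2_eq_square algebra_simps)
  finally show ?thesis .
qed

lemma integrable_grid_sqdist: "integrable M grid_sqdist"
proof -
  obtain a where "a \<in> A"
    using grid_nonempty by blast
  show ?thesis
  proof (rule Bochner_Integration.integrable_bound)
    show "integrable M (\<lambda>\<omega>. 2 * (norm (X \<omega>))\<^sup>2 + 2 * (norm a)\<^sup>2)"
      using integrable_norm_sq by simp
    show "AE \<omega> in M. norm (grid_sqdist \<omega>) \<le> norm (2 * (norm (X \<omega>))\<^sup>2 + 2 * (norm a)\<^sup>2)"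
      using grid_sqdist_le[OF \<open>a \<in> A\<close>] by (simp add: grid_sqdist_def)
  qed simp
qed

lemma integrable_sqdist_insert: "integrable M (\<lambda>\<omega>. (infdist (X \<omega>) (insert x A))\<^sup>2)"
  by (rule Bochner_Integration.integrable_bound[OF integrable_grid_sqdist])
     (simp_all add: grid_sqdist_def sqdist_insert_le_grid)

lemma integrable_X: "integrable M X"
  using square_integrable_imp_integrable[of "\<lambda>\<omega>. norm (X \<omega>)"] integrable_norm_sq
  by (simp add: integrable_norm_iff)

lemma grid_distortion_minus_distortion_le:
  "grid_distortion - distortion x \<le> (\<integral>\<omega>. indicator (inner_cell x) \<omega> * grid_sqdist \<omega> \<partial>M)"
proof -
  have "grid_distortion - distortion x = (\<integral>\<omega>. grid_sqdist \<omega> - (infdist (X \<omega>) (insert x A))\<^sup>2 \<partial>M)"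
    unfolding grid_distortion_def distortion_def
    by (simp add: integrable_grid_sqdist integrable_sqdist_insert)
  also have "\<dots> \<le> (\<integral>\<omega>. indicator (inner_cell x) \<omega> * grid_sqdist \<omega> \<partial>M)"
  proof (rule integral_mono)
    show "integrable M (\<lambda>\<omega>. indicator (inner_cell x) \<omega> * grid_sqdist \<omega>)"
      using integrable_real_mult_indicator[OF sets_inner_cell integrable_grid_sqdist]
      by (simp add: mult.commute)
    show "grid_sqdist \<omega> - (infdist (X \<omega>) (insert x A))\<^sup>2 \<le> indicator (inner_cell x) \<omega> * grid_sqdist \<omega>"
      if "\<omega> \<in> space M" for \<omega>
      using that by (auto simp: inner_cell_def indicator_def grid_sqdist_def infdist_insert_grid min_def)
  qed (simp add: integrable_grid_sqdist integrable_sqdist_insert)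
  finally show ?thesis .
qed

lemma inner_cell_mass_lower_bound:
  assumes "c < grid_distortion"
  obtains \<eta> where "\<eta> > 0" "\<And>x. distortion x \<le> c \<Longrightarrow> \<eta> \<le> measure M (inner_cell x)"
proof -
  define \<delta> where "\<delta> = grid_distortion - c"
  have "\<delta> > 0"
    using assms by (simp add: \<delta>_def)
  then obtain K where K: "K > 0"
    "\<And>S. S \<in> sets M \<Longrightarrow> (\<integral>\<omega>. indicator S \<omega> * grid_sqdist \<omega> \<partial>M) \<le> K * measure M S + \<delta> / 2"
    using uniformly_integrable_real[OF integrable_grid_sqdist, of "\<delta> / 2"] by auto
  show thesis
  proof (rule that[of "\<delta> / (2 * K)"])
    show "\<delta> / (2 * K) > 0"
      using \<open>\<delta> > 0\<close> K(1) by simp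
    fix x
    assume "distortion x \<le> c"
    then have "\<delta> \<le> K * measure M (inner_cell x) + \<delta> / 2"
      using grid_distortion_minus_distortion_le[of x] K(2)[OF sets_inner_cell[of x]] unfolding \<delta>_def
      by linarith
    then show "\<delta> / (2 * K) \<le> measure M (inner_cell x)"
      using K(1) by (simp add: field_simps)
  qed
qed

text \<open>Far from the grid, \<open>x\<close> can only beat it where \<open>X\<close> is itself large; Markov's inequality
  bounds the probability of that.\<close>
lemma inner_cell_mass_small_far:
  assumes "\<eta> > 0"
  obtains R where "\<And>x::'a. R \<le> norm x \<Longrightarrow> measure M (inner_cell x) < \<eta>"
proof -
  obtain a where "a \<in> A"
    using grid_nonempty by blast
  define E where "E = (\<integral>\<omega>. norm (X \<omega>) \<partial>M)"
  define r where "r = E / \<eta> + 1"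
  have "E \<ge> 0"
    unfolding E_def by simp
  then have "r > 0" "E / r < \<eta>"
    using assms by (auto simp: r_def field_simps)
  have markov: "measure M {\<omega>\<in>space M. r \<le> norm (X \<omega>)} \<le> E / r"
    unfolding E_def using \<open>r > 0\<close>
    by (intro integral_Markov_inequality_measure[where A="space M"]) (auto simp: integrable_X)
  show thesis
  proof (rule that[of "2 * r + norm a"])
    fix x :: 'a
    assume far: "2 * r + norm a \<le> norm x"
    have "inner_cell x \<subseteq> {\<omega>\<in>space M. r \<le> norm (X \<omega>)}"
    proof
      fix \<omega>
      assume "\<omega> \<in> inner_cell x"
      then have "\<omega> \<in> space M" "dist (X \<omega>) x < infdist (X \<omega>) A"
        by (auto simp: inner_cell_def)
      moreover have "infdist (X \<omega>) A \<le> norm (X \<omega>) + norm a"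
        using infdist_le[OF \<open>a \<in> A\<close>, of "X \<omega>"] norm_triangle_ineq4[of "X \<omega>" a]
        by (simp add: dist_norm)
      moreover have "norm x \<le> norm (X \<omega>) + dist (X \<omega>) x"
        using norm_triangle_sub[of x "X \<omega>"] by (simp add: dist_norm norm_minus_commute)
      ultimately show "\<omega> \<in> {\<omega>\<in>space M. r \<le> norm (X \<omega>)}"
        using far by auto
    qed
    then have "measure M (inner_cell x) \<le> measure M {\<omega>\<in>space M. r \<le> norm (X \<omega>)}"
      by (intro finite_measure_mono) measurable
    then show "measure M (inner_cell x) < \<eta>"
      using markov \<open>E / r < \<eta>\<close> by linarith
  qed
qed

lemma bounded_distortion_sublevel:
  assumes "c < grid_distortion"
  shows "bounded {x. distortion x \<le> c}"
proof -
  obtain \<eta> where "\<eta> > 0" and \<eta>: "\<And>x. distortion x \<le> c \<Longrightarrow> \<eta> \<le> measure M (inner_cell x)"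
    using inner_cell_mass_lower_bound[OF assms] by blast
  obtain R where R: "\<And>x::'a. R \<le> norm x \<Longrightarrow> measure M (inner_cell x) < \<eta>"
    using inner_cell_mass_small_far[OF \<open>\<eta> > 0\<close>] by blast
  have "norm x \<le> R" if "distortion x \<le> c" for x
    using \<eta>[OF that] R[of x] by fastforce
  then show ?thesis
    unfolding bounded_iff by blast
qed

lemma cell_mass_lower_bound:
  assumes "c < grid_distortion"
  obtains \<eta> where "\<eta> > 0" "\<And>x. distortion x \<le> c \<Longrightarrow> \<eta> \<le> cell_mass x"
proof -
  obtain \<eta> where "\<eta> > 0" and \<eta>: "\<And>x. distortion x \<le> c \<Longrightarrow> \<eta> \<le> measure M (inner_cell x)"
    using inner_cell_mass_lower_bound[OF assms] by blast
  show thesis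
  proof (rule that[OF \<open>\<eta> > 0\<close>])
    fix x
    assume "distortion x \<le> c"
    then show "\<eta> \<le> cell_mass x"
      unfolding cell_mass_def
      by (rule order_trans[OF \<eta> finite_measure_mono[OF inner_cell_subset_cell sets_cell]])
  qed
qed

lemma distortion_eq_grid_if_mem: "x \<in> A \<Longrightarrow> distortion x = grid_distortion"
  by (simp add: distortion_def grid_distortion_def grid_sqdist_def insert_absorb)

lemma distortion_less_grid:
  assumes "x \<in> distr_support M X" "x \<notin> A"
  shows "distortion x < grid_distortion"
proof -
  define r where "r = infdist x A"
  have "r > 0"
    unfolding r_def using finite_imp_closed[OF finite_grid] grid_nonempty assms(2)
    by (rule infdist_pos_not_in_closed)
  define B where "B = {\<omega>\<in>space M. dist x (X \<omega>) < r / 2}"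
  have B [measurable]: "B \<in> sets M"
    unfolding B_def by measurable
  have "measure M B > 0"
    using assms(1) half_gt_zero[OF \<open>r > 0\<close>] unfolding B_def distr_support_def mem_ball by blast
  then have "emeasure M B \<noteq> 0"
    by (simp add: emeasure_eq_measure)
  then show ?thesis
    unfolding distortion_def grid_distortion_def
  proof (rule integral_less_AE[OF integrable_sqdist_insert integrable_grid_sqdist _ B])
    show "AE \<omega> in M. \<omega> \<in> B \<longrightarrow> (infdist (X \<omega>) (insert x A))\<^sup>2 \<noteq> grid_sqdist \<omega>"
    proof (intro AE_I2 impI)
      fix \<omega>
      assume "\<omega> \<in> B"
      then have "dist (X \<omega>) x < r / 2"
        by (simp add: B_def dist_commute)
      moreover have "r \<le> infdist (X \<omega>) A + dist x (X \<omega>)"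
        using infdist_triangle[of x A "X \<omega>"] by (simp add: r_def)
      ultimately have "dist (X \<omega>) x < infdist (X \<omega>) A"
        by (simp add: dist_commute)
      then show "(infdist (X \<omega>) (insert x A))\<^sup>2 \<noteq> grid_sqdist \<omega>"
        by (simp add: infdist_insert_grid grid_sqdist_def min_def infdist_nonneg)
    qed
    show "AE \<omega> in M. (infdist (X \<omega>) (insert x A))\<^sup>2 \<le> grid_sqdist \<omega>"
      by (simp add: grid_sqdist_def sqdist_insert_le_grid)
  qed
qed

lemma cell_sqdist_gain_le:
  assumes "\<omega> \<in> space M"
  shows "indicator (cell x) \<omega> * ((dist (X \<omega>) x)\<^sup>2 - (dist (X \<omega>) c)\<^sup>2)
    \<le> (infdist (X \<omega>) (insert x A))\<^sup>2 - (infdist (X \<omega>) (insert c A))\<^sup>2"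
proof (cases "\<omega> \<in> cell x")
  case True
  then have "infdist (X \<omega>) (insert x A) = dist (X \<omega>) x"
    by (simp add: cell_eq infdist_insert_grid min_def)
  moreover have "(infdist (X \<omega>) (insert c A))\<^sup>2 \<le> (dist (X \<omega>) c)\<^sup>2"
    by (intro power_mono) (simp_all add: infdist_insert_grid infdist_nonneg)
  ultimately show ?thesis
    using True by simp
next
  case False
  then have "infdist (X \<omega>) (insert x A) = infdist (X \<omega>) A"
    using assms by (simp add: cell_eq infdist_insert_grid min_def)
  then show ?thesis
    using False sqdist_insert_le_grid[of "X \<omega>" c] by simp
qed

lemma integrable_cell_inner: "integrable M (\<lambda>\<omega>. indicator (cell x) \<omega> * (X \<omega> \<bullet> v))"
  using integrable_inner_left[OF integrable_mult_indicator[OF sets_cell integrable_X], of x v]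
  by simp

lemma integral_cell_inner: "(\<integral>\<omega>. indicator (cell x) \<omega> * (X \<omega> \<bullet> v) \<partial>M) = cell_moment x \<bullet> v"
  using integral_inner_left[OF integrable_mult_indicator[OF sets_cell integrable_X], of x v]
  by (simp add: cell_moment_def)

lemma cell_sqdist_diff_eq:
  "indicator (cell x) \<omega> * ((dist (X \<omega>) x)\<^sup>2 - (dist (X \<omega>) c)\<^sup>2)
    = ((norm (c - x))\<^sup>2 - 2 * (c \<bullet> (c - x))) * indicator (cell x) \<omega>
      + 2 * (indicator (cell x) \<omega> * (X \<omega> \<bullet> (c - x)))"
  unfolding sqdist_diff_eq by (simp add: algebra_simps)

lemma integrable_cell_sqdist_diff:
  "integrable M (\<lambda>\<omega>. indicator (cell x) \<omega> * ((dist (X \<omega>) x)\<^sup>2 - (dist (X \<omega>) c)\<^sup>2))"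
  unfolding cell_sqdist_diff_eq by (simp add: integrable_cell_inner)

text \<open>The integrand is affine in \<open>X\<close>, so its integral over the cell only involves
  \<open>cell_mass x\<close> and \<open>cell_moment x = cell_mass x *\<^sub>R lloyd_map x\<close>.\<close>
lemma integral_cell_sqdist_diff_lloyd_map:
  assumes "cell_mass x > 0"
  shows "(\<integral>\<omega>. indicator (cell x) \<omega> * ((dist (X \<omega>) x)\<^sup>2 - (dist (X \<omega>) (lloyd_map x))\<^sup>2) \<partial>M)
    = cell_mass x * (dist (lloyd_map x) x)\<^sup>2"
proof -
  define c where "c = lloyd_map x"
  define v where "v = c - x"
  have moment: "cell_moment x = cell_mass x *\<^sub>R c"
    using assms by (simp add: c_def lloyd_map_eq)
  have "(\<integral>\<omega>. indicator (cell x) \<omega> * ((dist (X \<omega>) x)\<^sup>2 - (dist (X \<omega>) c)\<^sup>2) \<partial>M)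
      = ((norm v)\<^sup>2 - 2 * (c \<bullet> v)) * cell_mass x + 2 * (cell_moment x \<bullet> v)"
    unfolding cell_sqdist_diff_eq v_def
    by (simp add: integrable_cell_inner integral_cell_inner cell_mass_def Int_absorb2 sets.sets_into_space)
  also have "\<dots> = cell_mass x * (norm v)\<^sup>2"
    by (simp add: moment algebra_simps)
  finally show ?thesis
    by (simp add: c_def v_def dist_norm norm_minus_commute)
qed

lemma lloyd_descent:
  assumes "cell_mass x > 0"
  shows "distortion (lloyd_map x) + cell_mass x * (dist (lloyd_map x) x)\<^sup>2 \<le> distortion x"
proof -
  have "cell_mass x * (dist (lloyd_map x) x)\<^sup>2
      \<le> (\<integral>\<omega>. (infdist (X \<omega>) (insert x A))\<^sup>2 - (infdist (X \<omega>) (insert (lloyd_map x) A))\<^sup>2 \<partial>M)"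
    unfolding integral_cell_sqdist_diff_lloyd_map[OF assms, symmetric]
    by (intro integral_mono integrable_cell_sqdist_diff cell_sqdist_gain_le)
       (simp add: integrable_sqdist_insert)
  also have "\<dots> = distortion x - distortion (lloyd_map x)"
    unfolding distortion_def by (simp add: integrable_sqdist_insert)
  finally show ?thesis
    by simp
qed

lemma distortion_nonneg: "0 \<le> distortion x"
  unfolding distortion_def by simp

lemma distortion_LIMSEQ:
  assumes "xs \<longlonglongrightarrow> x"
  shows "(\<lambda>n. distortion (xs n)) \<longlonglongrightarrow> distortion x"
  unfolding distortion_def
proof (rule integral_dominated_convergence[where w=grid_sqdist])
  show "AE \<omega> in M. (\<lambda>n. (infdist (X \<omega>) (insert (xs n) A))\<^sup>2) \<longlonglongrightarrow> (infdist (X \<omega>) (insert x A))\<^sup>2"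
    unfolding infdist_insert_grid by (intro AE_I2 tendsto_intros assms)
  show "AE \<omega> in M. norm ((infdist (X \<omega>) (insert (xs n) A))\<^sup>2) \<le> grid_sqdist \<omega>" for n
    by (simp add: grid_sqdist_def sqdist_insert_le_grid)
qed (simp_all add: integrable_grid_sqdist)

text \<open>This is where the hypothesis that hyperplanes are null is used: the cell boundaries lie in
  the bisector hyperplanes between \<open>x\<close> and the grid points.\<close>
lemma AE_not_equidistant:
  assumes "x \<notin> A"
  shows "AE \<omega> in M. \<forall>a\<in>A. dist (X \<omega>) x \<noteq> dist (X \<omega>) a"
proof (rule AE_finite_allI[OF finite_grid])
  fix a
  assume "a \<in> A"
  define N where "N = {\<omega>\<in>space M. X \<omega> \<bullet> (a - x) = (a \<bullet> a - x \<bullet> x) / 2}"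
  have [measurable]: "N \<in> sets M"
    unfolding N_def by measurable
  have "measure M N = 0"
    unfolding N_def using assms \<open>a \<in> A\<close> by (intro hyperplanes_null) auto
  then have "N \<in> null_sets M"
    by (simp add: null_setsI emeasure_eq_measure)
  moreover have "{\<omega>\<in>space M. \<not> dist (X \<omega>) x \<noteq> dist (X \<omega>) a} \<subseteq> N"
  proof
    fix \<omega>
    assume "\<omega> \<in> {\<omega>\<in>space M. \<not> dist (X \<omega>) x \<noteq> dist (X \<omega>) a}"
    then have "\<omega> \<in> space M" "dist (X \<omega>) x = dist (X \<omega>) a"
      by auto
    then have "(X \<omega> - x) \<bullet> (X \<omega> - x) = (X \<omega> - a) \<bullet> (X \<omega> - a)"
      by (simp add: dist_norm flip: power2_norm_eq_inner)
    with \<open>\<omega> \<in> space M\<close> show "\<omega> \<in> N"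
      by (simp add: N_def inner_commute algebra_simps)
  qed
  ultimately show "AE \<omega> in M. dist (X \<omega>) x \<noteq> dist (X \<omega>) a"
    by (rule AE_I')
qed

lemma cell_indicator_LIMSEQ:
  assumes "xs \<longlonglongrightarrow> x" "\<omega> \<in> space M" "\<forall>a\<in>A. dist (X \<omega>) x \<noteq> dist (X \<omega>) a"
  shows "(\<lambda>n. indicator (cell (xs n)) \<omega> :: real) \<longlonglongrightarrow> indicator (cell x) \<omega>"
proof -
  obtain a where "a \<in> A" "infdist (X \<omega>) A = dist (X \<omega>) a"
    using infdist_attains_inf[OF finite_imp_closed[OF finite_grid] grid_nonempty] by blast
  then have ne: "dist (X \<omega>) x \<noteq> infdist (X \<omega>) A"
    using assms(3) by auto
  have dist_LIMSEQ: "(\<lambda>n. dist (X \<omega>) (xs n)) \<longlonglongrightarrow> dist (X \<omega>) x"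
    by (intro tendsto_intros assms(1))
  have "\<forall>\<^sub>F n in sequentially. (dist (X \<omega>) (xs n) \<le> infdist (X \<omega>) A) = (dist (X \<omega>) x \<le> infdist (X \<omega>) A)"
  proof (cases "dist (X \<omega>) x < infdist (X \<omega>) A")
    case True
    show ?thesis
      using order_tendstoD(2)[OF dist_LIMSEQ True] by eventually_elim (use True in auto)
  next
    case False
    then have far: "infdist (X \<omega>) A < dist (X \<omega>) x"
      using ne by auto
    show ?thesis
      using order_tendstoD(1)[OF dist_LIMSEQ far] by eventually_elim (use far in auto)
  qed
  then show ?thesis
    using assms(2) by (intro tendsto_eventually) (auto elim: eventually_mono simp: cell_eq indicator_def)
qed

lemma lloyd_map_LIMSEQ:
  assumes "x \<notin> A" "cell_mass x > 0" "xs \<longlonglongrightarrow> x"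
  shows "(\<lambda>n. lloyd_map (xs n)) \<longlonglongrightarrow> lloyd_map x"
proof -
  have indicator_LIMSEQ:
    "AE \<omega> in M. (\<lambda>n. indicator (cell (xs n)) \<omega> :: real) \<longlonglongrightarrow> indicator (cell x) \<omega>"
    using AE_not_equidistant[OF assms(1)] AE_space
    by eventually_elim (auto intro: cell_indicator_LIMSEQ[OF assms(3)])
  have "(\<lambda>n. \<integral>\<omega>. indicator (cell (xs n)) \<omega> \<partial>M) \<longlonglongrightarrow> (\<integral>\<omega>. (indicator (cell x) \<omega> :: real) \<partial>M)"
  proof (rule integral_dominated_convergence[where w="\<lambda>_. 1"])
    show "AE \<omega> in M. norm (indicator (cell (xs n)) \<omega> :: real) \<le> 1" for n
      by (simp add: indicator_def)
  qed (simp_all add: indicator_LIMSEQ)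
  then have "(\<lambda>n. cell_mass (xs n)) \<longlonglongrightarrow> cell_mass x"
    by (simp add: cell_mass_def Int_absorb2 sets.sets_into_space)
  moreover have "(\<lambda>n. cell_moment (xs n)) \<longlonglongrightarrow> cell_moment x"
    unfolding cell_moment_def
  proof (rule integral_dominated_convergence[where w="\<lambda>\<omega>. norm (X \<omega>)"])
    show "AE \<omega> in M. (\<lambda>n. indicator (cell (xs n)) \<omega> *\<^sub>R X \<omega>) \<longlonglongrightarrow> indicator (cell x) \<omega> *\<^sub>R X \<omega>"
      using indicator_LIMSEQ by eventually_elim (intro tendsto_intros)
    show "AE \<omega> in M. norm (indicator (cell (xs n)) \<omega> *\<^sub>R X \<omega>) \<le> norm (X \<omega>)" for n
      by (simp add: indicator_def)
  qed (simp_all add: integrable_X)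
  ultimately show ?thesis
    unfolding lloyd_map_eq using assms(2) by (intro tendsto_intros) auto
qed

end

section \<open>The Lloyd orbit\<close>

locale lloyd_orbit = lloyd_one_point M X A
  for M :: "'p measure" and X :: "'p \<Rightarrow> 'a::euclidean_space" and A :: "'a set" +
  fixes b :: "nat \<Rightarrow> 'a"
  assumes orbit_cond_mean: "\<And>n. b (Suc n) = cond_mean M X (voronoi_cell A (b n))"
    and start_in_support: "b 0 \<in> distr_support M X"
    and start_not_in_grid: "b 0 \<notin> A"
begin

lemma orbit_Suc: "b (Suc n) = lloyd_map (b n)"
  by (simp add: lloyd_map_def orbit_cond_mean)

lemma distortion_start_less_grid: "distortion (b 0) < grid_distortion"
  using start_in_support start_not_in_grid by (rule distortion_less_grid)

text \<open>The constant \<open>\<eta>\<close> is uniform because the orbit never leaves the sublevel set of its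
  starting point, on which cell masses are bounded below.\<close>
lemma orbit_descent:
  obtains \<eta> where "\<eta> > 0"
    "\<And>n. distortion (b (Suc n)) + \<eta> * (dist (b (Suc n)) (b n))\<^sup>2 \<le> distortion (b n)"
proof -
  obtain \<eta> where "\<eta> > 0" and mass: "\<And>x. distortion x \<le> distortion (b 0) \<Longrightarrow> \<eta> \<le> cell_mass x"
    using cell_mass_lower_bound[OF distortion_start_less_grid] by blast
  have step: "distortion (b (Suc n)) + \<eta> * (dist (b (Suc n)) (b n))\<^sup>2 \<le> distortion (b n)"
    if "distortion (b n) \<le> distortion (b 0)" for n
  proof -
    have "\<eta> * (dist (b (Suc n)) (b n))\<^sup>2 \<le> cell_mass (b n) * (dist (b (Suc n)) (b n))\<^sup>2"
      using mass[OF that] by (simp add: mult_right_mono)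
    moreover have "cell_mass (b n) > 0"
      using mass[OF that] \<open>\<eta> > 0\<close> by linarith
    ultimately show ?thesis
      using lloyd_descent[of "b n"] by (simp add: orbit_Suc)
  qed
  have "distortion (b n) \<le> distortion (b 0)" for n
  proof (induction n)
    case (Suc n)
    have "0 \<le> \<eta> * (dist (b (Suc n)) (b n))\<^sup>2"
      using \<open>\<eta> > 0\<close> by simp
    then show ?case
      using step[OF Suc] Suc by linarith
  qed simp
  then show thesis
    using that[OF \<open>\<eta> > 0\<close> step] by blast
qed

lemma decseq_orbit_distortion: "decseq (\<lambda>n. distortion (b n))"
proof -
  obtain \<eta> where "\<eta> > 0"
    and step: "\<And>n. distortion (b (Suc n)) + \<eta> * (dist (b (Suc n)) (b n))\<^sup>2 \<le> distortion (b n)"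
    using orbit_descent by metis
  show ?thesis
  proof (rule decseq_SucI)
    fix n
    have "0 \<le> \<eta> * (dist (b (Suc n)) (b n))\<^sup>2"
      using \<open>\<eta> > 0\<close> by simp
    then show "distortion (b (Suc n)) \<le> distortion (b n)"
      using step[of n] by linarith
  qed
qed

lemma bounded_orbit: "bounded (range b)"
proof -
  have "range b \<subseteq> {x. distortion x \<le> distortion (b 0)}"
    using decseq_orbit_distortion by (auto simp: decseq_def)
  then show ?thesis
    using bounded_distortion_sublevel[OF distortion_start_less_grid]
    by (rule bounded_subset[rotated])
qed

definition limit_distortion :: real where
  "limit_distortion = (INF n. distortion (b n))"

lemma orbit_distortion_LIMSEQ: "(\<lambda>n. distortion (b n)) \<longlonglongrightarrow> limit_distortion"
  unfolding limit_distortion_def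
  by (rule LIMSEQ_decseq_INF[OF _ decseq_orbit_distortion]) (auto intro: distortion_nonneg)

lemma limit_distortion_le: "limit_distortion \<le> distortion (b n)"
  unfolding limit_distortion_def by (rule cINF_lower) (auto intro: distortion_nonneg)

lemma orbit_steps_vanish: "(\<lambda>n. dist (b (Suc n)) (b n)) \<longlonglongrightarrow> 0"
proof -
  obtain \<eta> where "\<eta> > 0"
    and step: "\<And>n. distortion (b (Suc n)) + \<eta> * (dist (b (Suc n)) (b n))\<^sup>2 \<le> distortion (b n)"
    using orbit_descent by metis
  have "(\<lambda>n. sqrt ((distortion (b n) - distortion (b (Suc n))) / \<eta>)) \<longlonglongrightarrow> 0"
    using tendsto_real_sqrt[OF tendsto_divide[OF tendsto_diff[OF orbit_distortion_LIMSEQ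
          LIMSEQ_Suc[OF orbit_distortion_LIMSEQ]] tendsto_const[of \<eta>]]] \<open>\<eta> > 0\<close>
    by simp
  moreover have "dist (b (Suc n)) (b n) \<le> sqrt ((distortion (b n) - distortion (b (Suc n))) / \<eta>)"
    for n
  proof (rule real_le_rsqrt)
    show "(dist (b (Suc n)) (b n))\<^sup>2 \<le> (distortion (b n) - distortion (b (Suc n))) / \<eta>"
      using step[of n] \<open>\<eta> > 0\<close> by (simp add: pos_le_divide_eq mult.commute)
  qed
  then have "\<forall>\<^sub>F n in sequentially.
      dist (b (Suc n)) (b n) \<le> sqrt ((distortion (b n) - distortion (b (Suc n))) / \<eta>)"
    by simp
  ultimately show ?thesis
    by (intro tendsto_sandwich[OF always_eventually[OF allI[OF zero_le_dist]] _ tendsto_const])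
qed

lemma distortion_limit_point:
  assumes "x \<in> limit_points b"
  shows "distortion x = limit_distortion"
proof -
  obtain r where r: "strict_mono r" "(\<lambda>n. b (r n)) \<longlonglongrightarrow> x"
    using assms by (auto simp: limit_points_def comp_def)
  show ?thesis
    using LIMSEQ_unique[OF distortion_LIMSEQ[OF r(2)]
        LIMSEQ_subseq_LIMSEQ[OF orbit_distortion_LIMSEQ r(1), unfolded comp_def]] .
qed

lemma lloyd_map_limit_point:
  assumes "x \<in> limit_points b"
  shows "lloyd_map x = x"
proof -
  obtain r where r: "strict_mono r" "(\<lambda>n. b (r n)) \<longlonglongrightarrow> x"
    using assms by (auto simp: limit_points_def comp_def)
  have below_start: "distortion x \<le> distortion (b 0)"
    using distortion_limit_point[OF assms] limit_distortion_le by simp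
  obtain \<eta> where "\<eta> > 0" and "\<And>x. distortion x \<le> distortion (b 0) \<Longrightarrow> \<eta> \<le> cell_mass x"
    using cell_mass_lower_bound[OF distortion_start_less_grid] by blast
  then have "cell_mass x > 0"
    using below_start by (simp add: less_le_trans)
  moreover have "x \<notin> A"
    using below_start distortion_start_less_grid distortion_eq_grid_if_mem by fastforce
  ultimately have "(\<lambda>n. b (Suc (r n))) \<longlonglongrightarrow> lloyd_map x"
    using lloyd_map_LIMSEQ[OF _ _ r(2)] by (simp add: orbit_Suc)
  moreover have "(\<lambda>n. b (Suc (r n))) \<longlonglongrightarrow> x"
  proof (rule Lim_transform[OF r(2)])
    show "(\<lambda>n. b (Suc (r n)) - b (r n)) \<longlonglongrightarrow> 0"
      using LIMSEQ_subseq_LIMSEQ[OF orbit_steps_vanish r(1)]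
      by (simp add: comp_def dist_norm tendsto_norm_zero_iff)
  qed
  ultimately show ?thesis
    by (rule LIMSEQ_unique)
qed

lemma quant_err2_orbit_LIMSEQ: "(\<lambda>n. quant_err2 M X (A \<union> {b n})) \<longlonglongrightarrow> sqrt limit_distortion"
  unfolding quant_err2_insert by (intro tendsto_real_sqrt orbit_distortion_LIMSEQ)

lemma limit_points_subset_fixed_points:
  "limit_points b \<subseteq> {x. quant_err2 M X (A \<union> {x}) = sqrt limit_distortion \<and>
    x = cond_mean M X (voronoi_cell A x)}"
  unfolding quant_err2_insert using distortion_limit_point lloyd_map_limit_point
  by (auto simp: lloyd_map_def)

end

theorem proposition6p2:
  fixes M :: "'p measure" and X :: "'p \<Rightarrow> 'a::euclidean_space"
    and a :: "nat \<Rightarrow> 'a" and b :: "nat \<Rightarrow> 'a" and N :: nat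
  assumes "DIM('a) \<ge> 2"
    and "prob_space M"
    and "X \<in> borel_measurable M"
    and "integrable M (\<lambda>\<omega>. (norm (X \<omega>))\<^sup>2)"
    and "\<And>u c. u \<noteq> 0 \<Longrightarrow> measure M {\<omega>\<in>space M. X \<omega> \<bullet> u = c} = 0"
    and "convex (distr_support M X)"
    and "greedy_quant_seq M X a"
    and "N \<ge> 2"
    and "b 0 \<in> distr_support M X - a ` {1..N-1}"
    and "\<And>n. b (Suc n) = cond_mean M X (voronoi_cell (a ` {1..N-1}) (b n))"
  shows "bounded (range b) \<and>
    (\<exists>l. quant_err2 M X (a ` {1..N}) \<le> l \<and> l \<le> quant_err2 M X (a ` {1..N-1} \<union> {b 0}) \<and>
      (let \<Lambda> = {x. quant_err2 M X (a ` {1..N-1} \<union> {x}) = l \<and>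
                     x = cond_mean M X (voronoi_cell (a ` {1..N-1}) x)} in
        connected (limit_points b) \<and> compact (limit_points b) \<and> limit_points b \<subseteq> \<Lambda> \<and>
        (\<lambda>n. quant_err2 M X (a ` {1..N-1} \<union> {b n})) \<longlonglongrightarrow> l \<and>
        ((\<forall>K. compact K \<longrightarrow> finite (\<Lambda> \<inter> K)) \<longrightarrow> (\<exists>x\<in>\<Lambda>. b \<longlonglongrightarrow> x))))"
proof -
  define A where "A = a ` {1..N-1}"
  interpret prob_space M
    by (fact assms(2))
  interpret lloyd_orbit M X A b
  proof unfold_locales
    show "finite A" "A \<noteq> {}"
      using assms(8) by (auto simp: A_def)
    show "b 0 \<in> distr_support M X" "b 0 \<notin> A"
      using assms(9) by (auto simp: A_def)
  qed (use assms(3,4,5,10) in \<open>auto simp: A_def\<close>)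
  define \<Lambda> where "\<Lambda> = {x. quant_err2 M X (A \<union> {x}) = sqrt limit_distortion \<and>
    x = cond_mean M X (voronoi_cell A x)}"
  have "quant_err2 M X (a ` {1..N}) \<le> quant_err2 M X (A \<union> {b n})" for n
    unfolding A_def using assms(8) by (intro greedy_quant_seq_le[OF assms(7)]) simp
  then have "quant_err2 M X (a ` {1..N}) \<le> sqrt limit_distortion"
    by (intro LIMSEQ_le_const[OF quant_err2_orbit_LIMSEQ]) blast
  moreover have "sqrt limit_distortion \<le> quant_err2 M X (A \<union> {b 0})"
    unfolding quant_err2_insert by (intro real_sqrt_le_mono limit_distortion_le)
  moreover have "limit_points b \<subseteq> \<Lambda>"
    unfolding \<Lambda>_def by (rule limit_points_subset_fixed_points)
  ultimately show ?thesis
    unfolding Let_def A_def[symmetric]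
    using bounded_orbit limit_points_connected[OF bounded_orbit orbit_steps_vanish]
      limit_points_compact[OF bounded_orbit] quant_err2_orbit_LIMSEQ
      LIMSEQ_if_limit_points_locally_finite[OF bounded_orbit orbit_steps_vanish, of \<Lambda>]
    unfolding \<Lambda>_def by blast
qed

end
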